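(* Let $X \subseteq 2^\omega$ be nice. Then for every Borel function $x \mapsto \langle Y^x, f^x\rangle$ from $2^\omega$ to $[\omega]^\omega \times \omega^\omega$ there exists $g \in \omega^\omega$ such that for every $x \in X$ there are infinitely many $n \in Y^x$ with $f^x(n) = g(n)$.
   Context: $[\omega]^\omega$ denotes the set of infinite subsets of $\omega$, viewed as a subspace of $2^\omega$. A set $X \subseteq 2^\omega$ is nice if for every Borel function $x \mapsto f^x$ from $2^\omega$ to $\omega^\omega$ there exists $g \in \omega^\omega$ such that for every $x \in X$ there are infinitely many $n$ with $f^x(n) = g(n)$. *)

theory Defs
  imports "HOL-Analysis.Analysis"
begin

text \<open>Cantor space 2^omega is modelled as the type nat \<Rightarrow> bool and Baire space
omega^omega as nat \<Rightarrow> nat, both with the product topology (Function_Topology);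
bool and nat carry discrete topologies.\<close>

definition nice :: "(nat \<Rightarrow> bool) set \<Rightarrow> bool" where
  "nice X \<longleftrightarrow>
     (\<forall>f :: (nat \<Rightarrow> bool) \<Rightarrow> (nat \<Rightarrow> nat). f \<in> borel_measurable borel \<longrightarrow>
        (\<exists>g :: nat \<Rightarrow> nat. \<forall>x\<in>X. infinite {n. f x n = g n}))"

end

theory Submission
  imports Defs
begin

text \<open>Enumerate Y x increasingly as y_0 < y_1 < ... and code the first k+1 points
(y_j, f x y_j) of the graph of f x over Y x as a natural number. This is a Borel function of x
with values in nat \<Rightarrow> nat, so niceness yields a guess G that is correct infinitely often for
every x \<in> X. Decoding G k as a list of pairs, choose by recursion on k pairwise distinct points
s k such that s k is a first coordinate of that list whenever the list has more than k distinct
first coordinates, as a correct guess does; let g (s k) be the value the list attaches to s k.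
Whenever G k is correct for x, s k lies in Y x and g agrees with f x there, and injectivity of
s turns the infinitely many such k into infinitely many points.\<close>

lemma measurable_count_space_app2:
  fixes a :: "'m \<Rightarrow> 'a::countable" and b :: "'m \<Rightarrow> 'b::countable"
  assumes "a \<in> M \<rightarrow>\<^sub>M count_space UNIV" and "b \<in> M \<rightarrow>\<^sub>M count_space UNIV"
  shows "(\<lambda>x. h (a x) (b x)) \<in> M \<rightarrow>\<^sub>M count_space UNIV"
  by (rule measurable_compose_countable[OF _ assms(1)], rule measurable_compose_countable[OF _ assms(2)])
    simp

lemma measurable_map_count_space:
  fixes h :: "'m \<Rightarrow> 'a \<Rightarrow> 'b::countable"
  assumes "\<And>j. (\<lambda>x. h x j) \<in> M \<rightarrow>\<^sub>M count_space UNIV"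
  shows "(\<lambda>x. map (h x) xs) \<in> M \<rightarrow>\<^sub>M count_space UNIV"
proof (induction xs)
  case (Cons j xs)
  then show ?case
    using measurable_count_space_app2[OF assms Cons, where h = Cons] by simp
qed simp

lemma borel_measurable_pair_components:
  fixes f :: "'m \<Rightarrow> 'a::topological_space" and g :: "'m \<Rightarrow> 'b::topological_space"
  assumes "(\<lambda>x. (f x, g x)) \<in> borel_measurable M"
  shows "f \<in> borel_measurable M" and "g \<in> borel_measurable M"
  using measurable_compose[OF assms borel_measurable_continuous_onI[OF continuous_on_fst[OF continuous_on_id]]]
    measurable_compose[OF assms borel_measurable_continuous_onI[OF continuous_on_snd[OF continuous_on_id]]]
  by simp_all

lemma measurable_component_count_space:
  fixes F :: "'m \<Rightarrow> 'i \<Rightarrow> 'b::{countable,t2_space}"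
  assumes "F \<in> borel_measurable M"
  shows "(\<lambda>x. F x i) \<in> M \<rightarrow>\<^sub>M count_space UNIV"
  using measurable_product_then_coordinatewise[OF assms]
  by (simp add: measurable_cong_sets[OF refl sets_borel_eq_count_space])

lemma borel_measurable_count_space_components:
  fixes F :: "'m \<Rightarrow> 'i::countable \<Rightarrow> 'b::{countable,t2_space,second_countable_topology}"
  assumes "\<And>i. (\<lambda>x. F x i) \<in> M \<rightarrow>\<^sub>M count_space UNIV"
  shows "F \<in> borel_measurable M"
  using assms
  by (intro measurable_coordinatewise_then_product)
    (simp add: measurable_cong_sets[OF refl sets_borel_eq_count_space])

lemma measurable_enumerate:
  fixes Y :: "'m \<Rightarrow> nat set"
  assumes "\<And>x. infinite (Y x)" and "\<And>n. (\<lambda>x. n \<in> Y x) \<in> M \<rightarrow>\<^sub>M count_space UNIV"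
  shows "(\<lambda>x. enumerate (Y x) k) \<in> M \<rightarrow>\<^sub>M count_space UNIV"
proof (induction k)
  case 0
  show ?case
    unfolding enumerate_0 by (rule measurable_Least[where P = "\<lambda>n x. n \<in> Y x"], rule assms(2))
next
  case (Suc k)
  show ?case
    unfolding enumerate_Suc''[OF assms(1)]
    by (rule measurable_Least[where P = "\<lambda>m x. m \<in> Y x \<and> enumerate (Y x) k < m"],
        rule measurable_count_space_app2[OF assms(2) Suc])
qed

definition fresh_pick :: "'a set \<Rightarrow> 'a set \<Rightarrow> 'a" where
  "fresh_pick A used = (SOME a. a \<notin> used \<and> (A \<subseteq> used \<or> a \<in> A))"

lemma fresh_pick:
  fixes used :: "'a set"
  assumes "finite used" and "infinite (UNIV :: 'a set)"
  shows "fresh_pick A used \<notin> used" and "\<not> A \<subseteq> used \<Longrightarrow> fresh_pick A used \<in> A"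
proof -
  have "\<exists>a. a \<notin> used \<and> (A \<subseteq> used \<or> a \<in> A)"
    using ex_new_if_finite[OF assms(2,1)] by blast
  from someI_ex[OF this] show "fresh_pick A used \<notin> used" and "\<not> A \<subseteq> used \<Longrightarrow> fresh_pick A used \<in> A"
    unfolding fresh_pick_def by auto
qed

primrec selections :: "(nat \<Rightarrow> 'a set) \<Rightarrow> nat \<Rightarrow> 'a list" where
  "selections A 0 = []"
| "selections A (Suc k) = selections A k @ [fresh_pick (A k) (set (selections A k))]"

definition selection :: "(nat \<Rightarrow> 'a set) \<Rightarrow> nat \<Rightarrow> 'a" where
  "selection A k = fresh_pick (A k) (set (selections A k))"

lemma selections_eq_map: "selections A k = map (selection A) [0..<k]"
  by (induction k) (simp_all add: selection_def)

lemma inj_selection: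
  assumes "infinite (UNIV :: 'a set)"
  shows "inj (selection (A :: nat \<Rightarrow> 'a set))"
proof -
  have "selection A j \<noteq> selection A k" if "j < k" for j k
  proof -
    have "selection A k \<notin> set (selections A k)"
      unfolding selection_def by (rule fresh_pick(1)[OF finite_set assms])
    moreover have "selection A j \<in> set (selections A k)"
      using that by (simp add: selections_eq_map)
    ultimately show ?thesis by metis
  qed
  then show ?thesis by (metis injI linorder_neqE_nat)
qed

lemma selection_mem:
  assumes "infinite (UNIV :: 'a set)" and "k < card (A k)"
  shows "selection (A :: nat \<Rightarrow> 'a set) k \<in> A k"
proof -
  have "card (set (selections A k)) \<le> k"
    using card_length[of "selections A k"] by (simp add: selections_eq_map)
  then have "\<not> A k \<subseteq> set (selections A k)"
    using assms(2) card_mono[OF finite_set] by fastforce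
  then show ?thesis
    unfolding selection_def by (rule fresh_pick(2)[OF finite_set assms(1)])
qed

lemma ex_inj_selection:
  assumes "infinite (UNIV :: 'a set)"
  shows "\<exists>s :: nat \<Rightarrow> 'a. inj s \<and> (\<forall>k. k < card (A k) \<longrightarrow> s k \<in> A k)"
  using inj_selection[OF assms] selection_mem[OF assms] by blast

definition graph_prefix :: "nat set \<Rightarrow> (nat \<Rightarrow> 'a) \<Rightarrow> nat \<Rightarrow> (nat \<times> 'a) list" where
  "graph_prefix Y h k = map (\<lambda>j. (enumerate Y j, h (enumerate Y j))) [0..<Suc k]"

lemma card_fst_graph_prefix:
  assumes "infinite Y"
  shows "card (fst ` set (graph_prefix Y h k)) = Suc k"
proof -
  have "fst ` set (graph_prefix Y h k) = enumerate Y ` {0..<Suc k}"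
    unfolding graph_prefix_def by (simp add: image_image del: upt_Suc)
  then show ?thesis
    using card_image[OF inj_on_subset[OF inj_enumerate[OF assms] subset_UNIV]] by simp
qed

lemma graph_prefix_memD:
  assumes "(n, v) \<in> set (graph_prefix Y h k)" and "infinite Y"
  shows "n \<in> Y" and "v = h n"
  using assms enumerate_in_set by (auto simp: graph_prefix_def)

lemma measurable_graph_prefix_code:
  fixes Y :: "'m \<Rightarrow> nat set" and f :: "'m \<Rightarrow> nat \<Rightarrow> nat"
  assumes "(\<lambda>x. (\<lambda>n. n \<in> Y x, f x)) \<in> borel_measurable M" and "\<And>x. infinite (Y x)"
  shows "(\<lambda>x k. to_nat (graph_prefix (Y x) (f x) k)) \<in> borel_measurable M"
proof -
  note components = borel_measurable_pair_components[OF assms(1)]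
  have mem: "(\<lambda>x. n \<in> Y x) \<in> M \<rightarrow>\<^sub>M count_space UNIV" for n
    using measurable_component_count_space[OF components(1), of n] by simp
  have val: "(\<lambda>x. f x n) \<in> M \<rightarrow>\<^sub>M count_space UNIV" for n
    by (rule measurable_component_count_space[OF components(2)])
  note enum = measurable_enumerate[OF assms(2) mem]
  have "(\<lambda>x. (enumerate (Y x) j, f x (enumerate (Y x) j))) \<in> M \<rightarrow>\<^sub>M count_space UNIV" for j
    using measurable_count_space_app2[OF enum measurable_compose_countable[OF val enum], where h = Pair] .
  then have "(\<lambda>x. graph_prefix (Y x) (f x) k) \<in> M \<rightarrow>\<^sub>M count_space UNIV" for k
    unfolding graph_prefix_def by (rule measurable_map_count_space)
  then have "(\<lambda>x. to_nat (graph_prefix (Y x) (f x) k)) \<in> M \<rightarrow>\<^sub>M count_space UNIV" for k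
    using measurable_compose[OF _ measurable_count_space] by blast
  then show ?thesis
    by (rule borel_measurable_count_space_components)
qed

lemma guess_from_graph_prefix_guess:
  fixes G :: "nat \<Rightarrow> nat"
  obtains g :: "nat \<Rightarrow> nat"
  where "\<And>Y h. infinite Y \<Longrightarrow> infinite {k. to_nat (graph_prefix Y h k) = G k}
           \<Longrightarrow> infinite {n \<in> Y. h n = g n}"
proof -
  define A where "A k = fst ` set (from_nat (G k) :: (nat \<times> nat) list)" for k
  obtain s :: "nat \<Rightarrow> nat" where "inj s" and s_mem: "\<And>k. k < card (A k) \<Longrightarrow> s k \<in> A k"
    using ex_inj_selection[OF infinite_UNIV_nat] by blast
  \<comment> \<open>inv s n is junk off the range of s, where g does not matter\<close>
  define g where "g n = (SOME v. (n, v) \<in> set (from_nat (G (inv s n)) :: (nat \<times> nat) list))" for n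
  have guess: "infinite {n \<in> Y. h n = g n}"
    if "infinite Y" and "infinite {k. to_nat (graph_prefix Y h k) = G k}" (is "infinite ?K") for Y h
  proof -
    have "s k \<in> Y \<and> h (s k) = g (s k)" if "k \<in> ?K" for k
    proof -
      have "to_nat (graph_prefix Y h k) = G k"
        using \<open>k \<in> ?K\<close> by simp
      then have code: "from_nat (G k) = graph_prefix Y h k"
        by (metis from_nat_to_nat)
      have "s k \<in> A k"
        using s_mem[of k] card_fst_graph_prefix[OF \<open>infinite Y\<close>, of h k] by (simp add: A_def code)
      then obtain v where v: "(s k, v) \<in> set (graph_prefix Y h k)"
        unfolding A_def code by force
      have "g (s k) = (SOME v. (s k, v) \<in> set (graph_prefix Y h k))"
        by (simp add: g_def inv_f_f[OF \<open>inj s\<close>] code)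
      then have pair: "(s k, g (s k)) \<in> set (graph_prefix Y h k)"
        using someI[of "\<lambda>v. (s k, v) \<in> set (graph_prefix Y h k)", OF v] by simp
      show ?thesis
        using graph_prefix_memD[OF pair \<open>infinite Y\<close>] by simp
    qed
    then have "s ` ?K \<subseteq> {n \<in> Y. h n = g n}"
      by blast
    moreover have "infinite (s ` ?K)"
      using finite_imageD[OF _ inj_on_subset[OF \<open>inj s\<close> subset_UNIV]] that(2) by blast
    ultimately show ?thesis
      using finite_subset by blast
  qed
  then show ?thesis by (rule that)
qed

theorem lemma2p5:
  fixes X :: "(nat \<Rightarrow> bool) set"
    and Y :: "(nat \<Rightarrow> bool) \<Rightarrow> nat set"
    and f :: "(nat \<Rightarrow> bool) \<Rightarrow> (nat \<Rightarrow> nat)"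
  assumes "nice X"
    and "(\<lambda>x. (\<lambda>n. n \<in> Y x, f x)) \<in> borel_measurable borel"
    and "\<And>x. infinite (Y x)"
  shows "\<exists>g :: nat \<Rightarrow> nat. \<forall>x\<in>X. infinite {n \<in> Y x. f x n = g n}"
proof -
  obtain G where G: "\<forall>x\<in>X. infinite {k. to_nat (graph_prefix (Y x) (f x) k) = G k}"
    using assms(1)[unfolded nice_def, rule_format, OF measurable_graph_prefix_code[OF assms(2,3)]] ..
  obtain g :: "nat \<Rightarrow> nat" where g: "\<And>Y h. infinite Y \<Longrightarrow> infinite {k. to_nat (graph_prefix Y h k) = G k}
      \<Longrightarrow> infinite {n \<in> Y. h n = g n}"
    using guess_from_graph_prefix_guess[of G] by blast
  have "infinite {n \<in> Y x. f x n = g n}" if "x \<in> X" for x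
    using g[OF assms(3) G[rule_format, OF that]] .
  then show ?thesis by blast
qed

end
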